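(* Let $Q\in R$ and let $a,b,c,d$ be non-negative integers with $a+b\le n$ and $1\le c\le d\le b$. Then there exist elements $h_k\in H_{k-1,k}$ ($a+c\le k\le a+d$) such that $$T_{w_{a,b}}L_{c,d}(Q)=\Big\{L_{a+c,a+d}(Q)+\sum_{k=a+c}^{a+d}L_kh_k\Big\}T_{w_{a,b}}.$$
   Context: Ariki–Koike algebra: $R$ a commutative integral domain with $1$, $n,r\ge1$, $q,Q_1,\dots,Q_r\in R$, $q$ invertible; generators $T_0,\dots,T_{n-1}$, relations $(T_0-Q_1)\cdots(T_0-Q_r)=0$, $T_0T_1T_0T_1=T_1T_0T_1T_0$, $(T_i+q)(T_i-1)=0$ ($1\le i\le n-1$), $T_{i+1}T_iT_{i+1}=T_iT_{i+1}T_i$, $T_iT_j=T_jT_i$ ($0\le i<j-1\le n-2$). $T_w=T_{i_1}\cdots T_{i_k}$ for a reduced expression $w=s_{i_1}\cdots s_{i_k}$, $s_i=(i,i+1)$. $L_m=q^{1-m}T_{m-1}\cdots T_1T_0T_1\cdots T_{m-1}$. Notation: for $i\le j$, $T_{i,j}=T_iT_{i+1}\cdots T_j$, and $T_{i,j}=1$ if $i>j$. $T_{w_{a,b}}=T_{a,a+b-1}T_{a-1,a+b-2}\cdots T_{1,b}$ (and $T_{w_{a,b}}=1$ if $a=0$ or $b=0$); this is $T_w$ for the permutation $w_{a,b}$ sending $i\mapsto b+i$ for $1\le i\le a$ and $a+i\mapsto i$ for $1\le i\le b$, the product of the $s_{i,j}=s_is_{i+1}\cdots s_j$ being reduced. For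 $Q\in R$, $L_{i,j}(Q)=(L_i-Q)(L_{i+1}-Q)\cdots(L_j-Q)$ if $i\le j$ and $1$ if $i>j$. For $0\le k\le m\le n$, $H_{k,m}$ is the $R$-span of $\{L_1^{c_1}\cdots L_k^{c_k}T_w:0\le c_i<r,\ w\in\mathfrak S_m\}$, where $\mathfrak S_m\subseteq\mathfrak S_n$ is generated by $s_1,\dots,s_{m-1}$. *)

theory Defs
  imports "HOL-Combinatorics.Permutations" "HOL-Combinatorics.Transposition"
begin

text \<open>An R-algebra A is modelled as a ring A together with a ring homomorphism
  emb : R -> A whose image is central.  The Ariki-Koike algebra is the universal
  such algebra with elements T_0..T_{n-1} satisfying the defining relations; we
  state the result for every R-algebra with elements satisfying the relations
  (which is equivalent, by universality).\<close>

definition central_emb :: "('r::comm_ring_1 \<Rightarrow> 'a::ring_1) \<Rightarrow> bool" where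
  "central_emb emb \<longleftrightarrow> emb 1 = 1 \<and> (\<forall>x y. emb (x + y) = emb x + emb y)
     \<and> (\<forall>x y. emb (x * y) = emb x * emb y) \<and> (\<forall>x z. emb x * z = z * emb x)"

definition lprod :: "'a::monoid_mult list \<Rightarrow> 'a" where
  "lprod xs = foldr (*) xs 1"

definition rspan :: "('r \<Rightarrow> 'a::ring_1) \<Rightarrow> 'a set \<Rightarrow> 'a set" where
  "rspan emb S = {x. \<exists>F g. finite F \<and> F \<subseteq> S \<and> x = (\<Sum>y\<in>F. emb (g y) * y)}"

definition AK_rels :: "('r::comm_ring_1 \<Rightarrow> 'a::ring_1) \<Rightarrow> nat \<Rightarrow> nat \<Rightarrow> 'r \<Rightarrow> 'r \<Rightarrow> (nat \<Rightarrow> 'r)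
    \<Rightarrow> (nat \<Rightarrow> 'a) \<Rightarrow> bool" where
  "AK_rels emb n r q qinv Qs T \<longleftrightarrow>
     central_emb emb \<and> q * qinv = 1 \<and>
     lprod (map (\<lambda>j. T 0 - emb (Qs j)) [1..<r+1]) = 0 \<and>
     T 0 * T 1 * T 0 * T 1 = T 1 * T 0 * T 1 * T 0 \<and>
     (\<forall>i. 1 \<le> i \<and> i \<le> n - 1 \<longrightarrow> (T i + emb q) * (T i - 1) = 0) \<and>
     (\<forall>i. 1 \<le> i \<and> i \<le> n - 2 \<longrightarrow> T (i+1) * T i * T (i+1) = T i * T (i+1) * T i) \<and>
     (\<forall>i j. i + 1 < j \<and> j \<le> n - 1 \<longrightarrow> T i * T j = T j * T i)"

definition AK_L :: "('r::comm_ring_1 \<Rightarrow> 'a::ring_1) \<Rightarrow> 'r \<Rightarrow> (nat \<Rightarrow> 'a) \<Rightarrow> nat \<Rightarrow> 'a" where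
  "AK_L emb qinv T m = emb (qinv ^ (m - 1)) *
     lprod (map T (rev [1..<m] @ [0] @ [1..<m]))"

definition Tij :: "(nat \<Rightarrow> 'a::monoid_mult) \<Rightarrow> nat \<Rightarrow> nat \<Rightarrow> 'a" where
  "Tij T i j = lprod (map T [i..<j+1])"

text \<open>T_{w_{a,b}} = T_{a,a+b-1} T_{a-1,a+b-2} ... T_{1,b}.\<close>
definition Twab :: "(nat \<Rightarrow> 'a::monoid_mult) \<Rightarrow> nat \<Rightarrow> nat \<Rightarrow> 'a" where
  "Twab T a b = (if a = 0 \<or> b = 0 then 1
     else lprod (map (\<lambda>t. Tij T (a - t) (a + b - 1 - t)) [0..<a]))"

definition Lij :: "('r::comm_ring_1 \<Rightarrow> 'a::ring_1) \<Rightarrow> 'r \<Rightarrow> (nat \<Rightarrow> 'a) \<Rightarrow> nat \<Rightarrow> nat \<Rightarrow> 'r \<Rightarrow> 'a" where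
  "Lij emb qinv T i j Q = lprod (map (\<lambda>k. AK_L emb qinv T k - emb Q) [i..<j+1])"

definition perm_of_word :: "nat list \<Rightarrow> nat \<Rightarrow> nat" where
  "perm_of_word ws = foldr (\<lambda>i f. transpose i (Suc i) \<circ> f) ws id"

definition reduced_word :: "nat \<Rightarrow> (nat \<Rightarrow> nat) \<Rightarrow> nat list \<Rightarrow> bool" where
  "reduced_word n w ws \<longleftrightarrow> set ws \<subseteq> {1..<n} \<and> perm_of_word ws = w \<and>
     (\<forall>vs. set vs \<subseteq> {1..<n} \<and> perm_of_word vs = w \<longrightarrow> length ws \<le> length vs)"

definition Tw :: "nat \<Rightarrow> (nat \<Rightarrow> 'a::monoid_mult) \<Rightarrow> (nat \<Rightarrow> nat) \<Rightarrow> 'a" where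
  "Tw n T w = lprod (map T (SOME ws. reduced_word n w ws))"

definition Hkm :: "('r::comm_ring_1 \<Rightarrow> 'a::ring_1) \<Rightarrow> nat \<Rightarrow> nat \<Rightarrow> 'r \<Rightarrow> (nat \<Rightarrow> 'a)
    \<Rightarrow> nat \<Rightarrow> nat \<Rightarrow> 'a set" where
  "Hkm emb n r qinv T k m = rspan emb
     {lprod (map (\<lambda>i. AK_L emb qinv T i ^ c i) [1..<k+1]) * Tw n T w | c w.
        (\<forall>i\<in>{1..k}. c i < r) \<and> w permutes {1..m}}"

end

theory Submission
  imports Defs
begin

text \<open>
  In a cycle
  \<open>T\<^bsub>s,e\<^esub> = T\<^bsub>s,k-1\<^esub> T\<^sub>k T\<^bsub>k+1,e\<^esub>\<close> the right factor commutes with \<open>L\<^sub>k\<close> and with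
  \<open>H(\<SS>\<^sub>k)\<close>, the left one with \<open>L\<^bsub>k+1\<^esub>\<close>, and \<open>T\<^sub>k L\<^sub>k = L\<^bsub>k+1\<^esub> (T\<^sub>k + q - 1)\<close>; hence
  \<open>T\<^bsub>s,e\<^esub> (L\<^sub>k - Q + L\<^sub>k h) = (L\<^bsub>k+1\<^esub> - Q + L\<^bsub>k+1\<^esub> h') T\<^bsub>s,e\<^esub>\<close> with
  \<open>h' \<in> H(\<SS>\<^bsub>k+1\<^esub>)\<close> whenever \<open>h \<in> H(\<SS>\<^sub>k)\<close>. Passing through the \<open>a\<close> cycles moves
  \<open>L\<^sub>j - Q\<close> to \<open>L\<^bsub>a+j\<^esub> - Q + L\<^bsub>a+j\<^esub> h\<close>. Multiplying these for \<open>j = c, \<dots>, d\<close>, the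
  \<open>L\<^sub>k\<close> commute with each other and with everything built from \<open>L\<^sub>1, \<dots>, L\<^bsub>k-1\<^esub>\<close> and
  \<open>H(\<SS>\<^bsub>k-1\<^esub>)\<close>, so the cross terms collect into \<open>\<Sum> L\<^sub>k h\<^sub>k\<close> where each \<open>h\<^sub>k\<close> is a
  combination of square-free monomials in \<open>L\<^sub>1, \<dots>, L\<^bsub>k-1\<^esub>\<close> times elements of
  \<open>H(\<SS>\<^sub>k)\<close>, and so lies in \<open>H\<^bsub>k-1,k\<^esub>\<close>. Since \<open>T\<^sub>w\<close> is defined through a chosen reduced
  word, Matsumoto's theorem is needed to identify \<open>H(\<SS>\<^sub>k)\<close> with the span of the \<open>T\<^sub>w\<close>.
\<close>

section \<open>Reduced words in the symmetric group\<close>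

abbreviation sw :: "nat \<Rightarrow> nat \<Rightarrow> nat" where "sw i \<equiv> transpose i (Suc i)"

definition inversions :: "nat \<Rightarrow> (nat \<Rightarrow> nat) \<Rightarrow> (nat \<times> nat) set" where
  "inversions n w = {(p, q). p \<in> {1..n} \<and> q \<in> {1..n} \<and> p < q \<and> w q < w p}"

definition inversion_number :: "nat \<Rightarrow> (nat \<Rightarrow> nat) \<Rightarrow> nat" where
  "inversion_number n w = card (inversions n w)"

text \<open>\<open>i\<close> is a left descent of \<open>w\<close> iff \<open>s\<^sub>i w\<close> is shorter than \<open>w\<close>.\<close>
definition left_descent :: "(nat \<Rightarrow> nat) \<Rightarrow> nat \<Rightarrow> bool" where
  "left_descent w i \<longleftrightarrow> inv w (Suc i) < inv w i"

lemma finite_inversions: "finite (inversions n w)"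
  by (rule finite_subset[of _ "{1..n} \<times> {1..n}"]) (auto simp: inversions_def)

lemma inversion_number_id [simp]: "inversion_number n id = 0"
proof -
  have "inversions n id = {}" by (auto simp: inversions_def)
  then show ?thesis by (simp add: inversion_number_def)
qed

lemma perm_of_word_Nil [simp]: "perm_of_word [] = id"
  by (simp add: perm_of_word_def)

lemma perm_of_word_Cons [simp]: "perm_of_word (i # ws) = sw i \<circ> perm_of_word ws"
  by (simp add: perm_of_word_def)

lemma sw_permutes: "1 \<le> i \<Longrightarrow> i < n \<Longrightarrow> sw i permutes {1..n}"
  by (intro permutes_swap_id) auto

lemma sw_comp_permutes: "w permutes {1..n} \<Longrightarrow> 1 \<le> i \<Longrightarrow> i < n \<Longrightarrow> sw i \<circ> w permutes {1..n}"
  by (intro permutes_compose sw_permutes)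

lemma sw_comp_sw_comp [simp]: "sw i \<circ> (sw i \<circ> w) = w"
  by (simp add: comp_assoc[symmetric])

lemma perm_of_word_permutes: "set ws \<subseteq> {1..<n} \<Longrightarrow> perm_of_word ws permutes {1..n}"
proof (induction ws)
  case (Cons i ws)
  then show ?case by (simp only: perm_of_word_Cons) (rule sw_comp_permutes; auto)
qed (simp add: permutes_id)

lemma inv_sw_comp: "w permutes S \<Longrightarrow> inv (sw i \<circ> w) x = inv w (sw i x)"
  by (simp add: o_inv_distrib permutes_bij)

lemma sw_less_sw_iff:
  assumes "x \<noteq> y" "\<not> (x = i \<and> y = Suc i)" "\<not> (x = Suc i \<and> y = i)"
  shows "sw i x < sw i y \<longleftrightarrow> x < y"
  using assms by (auto simp: transpose_def)

text \<open>Only the pair of positions holding the values \<open>i\<close> and \<open>i + 1\<close> changes its status.\<close>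
lemma inversions_sw_comp:
  assumes w: "w permutes {1..n}"
  shows "inversions n (sw i \<circ> w) - {(inv w i, inv w (Suc i))} =
    inversions n w - {(inv w (Suc i), inv w i)}"
proof -
  define p0 where "p0 = inv w i"
  define p1 where "p1 = inv w (Suc i)"
  have wp: "w p0 = i" "w p1 = Suc i"
    unfolding p0_def p1_def using permutes_inverses(1)[OF w] by auto
  have inj: "x = y" if "w x = w y" for x y using injD[OF permutes_inj[OF w] that] .
  have order: "sw i (w q) < sw i (w p) \<longleftrightarrow> w q < w p"
    if "p \<noteq> q" "(p, q) \<noteq> (p0, p1)" "(p, q) \<noteq> (p1, p0)" for p q
    by (rule sw_less_sw_iff) (use that wp inj in metis)+
  show ?thesis unfolding p0_def[symmetric] p1_def[symmetric]
  proof (rule set_eqI)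
    fix x
    show "x \<in> inversions n (sw i \<circ> w) - {(p0, p1)} \<longleftrightarrow> x \<in> inversions n w - {(p1, p0)}"
    proof (cases x)
      case (Pair p q)
      show ?thesis
      proof (cases "(p, q) = (p0, p1) \<or> (p, q) = (p1, p0)")
        case True
        then show ?thesis using Pair wp by (auto simp: inversions_def)
      next
        case False
        then show ?thesis using Pair order[of p q] by (auto simp: inversions_def)
      qed
    qed
  qed
qed

lemma inversion_number_sw_comp:
  assumes w: "w permutes {1..n}" and i: "1 \<le> i" "i < n"
  shows "left_descent w i \<Longrightarrow> inversion_number n (sw i \<circ> w) + 1 = inversion_number n w"
    and "\<not> left_descent w i \<Longrightarrow> inversion_number n (sw i \<circ> w) = inversion_number n w + 1"
proof -
  define p0 where "p0 = inv w i"
  define p1 where "p1 = inv w (Suc i)"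
  have wp: "w p0 = i" "w p1 = Suc i"
    unfolding p0_def p1_def using permutes_inverses(1)[OF w] by auto
  have p: "p0 \<in> {1..n}" "p1 \<in> {1..n}"
    unfolding p0_def p1_def permutes_in_image[OF permutes_inv[OF w]] using i by auto
  have same: "inversions n (sw i \<circ> w) - {(p0, p1)} = inversions n w - {(p1, p0)}"
    unfolding p0_def p1_def by (rule inversions_sw_comp[OF w])
  have mem: "(p0, p1) \<in> inversions n (sw i \<circ> w) \<longleftrightarrow> p0 < p1"
    "(p1, p0) \<in> inversions n w \<longleftrightarrow> p1 < p0"
    using wp p by (auto simp: inversions_def)
  show "inversion_number n (sw i \<circ> w) + 1 = inversion_number n w" if "left_descent w i"
  proof -
    have "p1 < p0" using that by (simp add: left_descent_def p0_def p1_def)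
    then have "inversions n (sw i \<circ> w) = inversions n w - {(p1, p0)}" "(p1, p0) \<in> inversions n w"
      using same mem by auto
    then show ?thesis
      using card.remove[OF finite_inversions, of "(p1, p0)" n w] by (simp add: inversion_number_def)
  qed
  show "inversion_number n (sw i \<circ> w) = inversion_number n w + 1" if "\<not> left_descent w i"
  proof -
    have "p0 \<noteq> p1" using wp by auto
    then have "p0 < p1" using that by (simp add: left_descent_def p0_def p1_def)
    then have "inversions n w = inversions n (sw i \<circ> w) - {(p0, p1)}"
      "(p0, p1) \<in> inversions n (sw i \<circ> w)"
      using same mem by auto
    then show ?thesis
      using card.remove[OF finite_inversions, of "(p0, p1)" n "sw i \<circ> w"]
      by (simp add: inversion_number_def)
  qed
qed

lemma inversion_number_le_length:
  "set ws \<subseteq> {1..<n} \<Longrightarrow> inversion_number n (perm_of_word ws) \<le> length ws"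
proof (induction ws)
  case (Cons i ws)
  have "perm_of_word ws permutes {1..n}" by (rule perm_of_word_permutes) (use Cons.prems in auto)
  moreover have "1 \<le> i" "i < n" using Cons.prems by auto
  ultimately
  have "inversion_number n (sw i \<circ> perm_of_word ws) \<le> inversion_number n (perm_of_word ws) + 1"
    using inversion_number_sw_comp by (cases "left_descent (perm_of_word ws) i") fastforce+
  moreover have "inversion_number n (perm_of_word ws) \<le> length ws" using Cons by simp
  ultimately show ?case by (simp only: perm_of_word_Cons length_Cons; linarith)
qed simp

lemma permutes_without_left_descent_eq_id:
  assumes w: "w permutes {1..n}" and no_descent: "\<And>i. 1 \<le> i \<Longrightarrow> i < n \<Longrightarrow> \<not> left_descent w i"
  shows "w = id"
proof -
  have wi: "inv w permutes {1..n}" using permutes_inv[OF w] .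
  have incr: "inv w i < inv w (Suc i)" if "1 \<le> i" "i < n" for i
  proof -
    have "inv w i \<noteq> inv w (Suc i)" using injD[OF permutes_inj[OF wi]] by (metis n_not_Suc_n)
    then show ?thesis using no_descent[OF that] by (simp add: left_descent_def)
  qed
  have "\<forall>x\<in>{1..n}. x \<le> inv w x"
  proof
    show "x \<le> inv w x" if "x \<in> {1..n}" for x
      using that
    proof (induction x)
      case (Suc x)
      show ?case
      proof (cases "x = 0")
        case True
        then show ?thesis using Suc.prems permutes_in_image[OF wi, of 1] by simp
      next
        case False
        then show ?thesis using Suc incr[of x] by simp
      qed
    qed simp
  qed
  then have "inv w = id" by (rule permutes_natset_ge[OF wi])
  then show "w = id" by (metis inv_id inv_inv_eq permutes_bij[OF w])
qed

lemma exists_word_of_length_inversion_number: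
  assumes "w permutes {1..n}"
  shows "\<exists>ws. set ws \<subseteq> {1..<n} \<and> perm_of_word ws = w \<and> length ws = inversion_number n w"
  using assms
proof (induction "inversion_number n w" arbitrary: w rule: less_induct)
  case less
  show ?case
  proof (cases "\<exists>i. 1 \<le> i \<and> i < n \<and> left_descent w i")
    case True
    then obtain i where i: "1 \<le> i" "i < n" "left_descent w i" by auto
    have shorter: "inversion_number n (sw i \<circ> w) + 1 = inversion_number n w"
      using inversion_number_sw_comp(1)[OF less.prems i] .
    obtain ws where ws: "set ws \<subseteq> {1..<n}" "perm_of_word ws = sw i \<circ> w"
      "length ws = inversion_number n (sw i \<circ> w)"
      using less.hyps[OF _ sw_comp_permutes[OF less.prems i(1,2)]] shorter by auto
    show ?thesis using ws i shorter by (intro exI[of _ "i # ws"]) auto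
  next
    case False
    then have "w = id" using permutes_without_left_descent_eq_id[OF less.prems] by blast
    then show ?thesis by (intro exI[of _ "[]"]) simp
  qed
qed

lemma reduced_word_iff:
  assumes "w permutes {1..n}"
  shows "reduced_word n w ws \<longleftrightarrow>
    set ws \<subseteq> {1..<n} \<and> perm_of_word ws = w \<and> length ws = inversion_number n w"
proof
  assume r: "reduced_word n w ws"
  obtain vs where vs: "set vs \<subseteq> {1..<n}" "perm_of_word vs = w" "length vs = inversion_number n w"
    using exists_word_of_length_inversion_number[OF assms] by auto
  have "length ws \<le> length vs" using r vs unfolding reduced_word_def by auto
  moreover have "inversion_number n w \<le> length ws"
    using r inversion_number_le_length[of ws n] unfolding reduced_word_def by auto
  ultimately show "set ws \<subseteq> {1..<n} \<and> perm_of_word ws = w \<and> length ws = inversion_number n w"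
    using r vs unfolding reduced_word_def by auto
next
  assume "set ws \<subseteq> {1..<n} \<and> perm_of_word ws = w \<and> length ws = inversion_number n w"
  then show "reduced_word n w ws"
    unfolding reduced_word_def using inversion_number_le_length by fastforce
qed

definition reduced :: "nat \<Rightarrow> nat list \<Rightarrow> bool" where
  "reduced n ws \<longleftrightarrow> set ws \<subseteq> {1..<n} \<and> length ws = inversion_number n (perm_of_word ws)"

lemma exists_reduced: "w permutes {1..n} \<Longrightarrow> \<exists>ws. reduced n ws \<and> perm_of_word ws = w"
  using exists_word_of_length_inversion_number unfolding reduced_def by metis

lemma left_descent_sw_comp_self:
  assumes "w permutes S"
  shows "left_descent (sw i \<circ> w) i \<longleftrightarrow> \<not> left_descent w i"
proof -
  have "inv w i \<noteq> inv w (Suc i)"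
    using injD[OF permutes_inj[OF permutes_inv[OF assms]]] by (metis n_not_Suc_n)
  then show ?thesis by (auto simp: left_descent_def inv_sw_comp[OF assms])
qed

lemma reduced_ConsD:
  assumes "reduced n (i # u)"
  shows "reduced n u" "perm_of_word u = sw i \<circ> perm_of_word (i # u)"
    "left_descent (perm_of_word (i # u)) i" "1 \<le> i" "i < n"
proof -
  have u: "set u \<subseteq> {1..<n}" and i: "1 \<le> i" "i < n" using assms by (auto simp: reduced_def)
  then show "1 \<le> i" "i < n" by auto
  define v where "v = perm_of_word u"
  have v: "v permutes {1..n}" using perm_of_word_permutes[OF u] v_def by simp
  have le: "inversion_number n v \<le> length u" using inversion_number_le_length[OF u] v_def by simp
  have len: "Suc (length u) = inversion_number n (sw i \<circ> v)" using assms v_def by (simp add: reduced_def)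
  have "\<not> left_descent v i"
    using inversion_number_sw_comp(1)[OF v i] le len by auto
  then have "inversion_number n (sw i \<circ> v) = inversion_number n v + 1"
    and "left_descent (sw i \<circ> v) i"
    using inversion_number_sw_comp(2)[OF v i] left_descent_sw_comp_self[OF v] by auto
  then show "reduced n u" "left_descent (perm_of_word (i # u)) i"
    using u le len v_def by (auto simp: reduced_def)
  show "perm_of_word u = sw i \<circ> perm_of_word (i # u)" by simp
qed

lemma reduced_ConsI:
  assumes "reduced n z" "1 \<le> i" "i < n" "perm_of_word z = sw i \<circ> w" "w permutes {1..n}"
    "left_descent w i"
  shows "reduced n (i # z)" "perm_of_word (i # z) = w"
proof -
  have "inversion_number n (sw i \<circ> w) + 1 = inversion_number n w"
    using inversion_number_sw_comp(1) assms(2,3,5,6) by blast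
  moreover show "perm_of_word (i # z) = w" using assms(4) by simp
  ultimately show "reduced n (i # z)" using assms(1-4) by (auto simp: reduced_def)
qed

lemma left_descent_sw_comp_far:
  "w permutes S \<Longrightarrow> i + 1 < j \<or> j + 1 < i \<Longrightarrow> left_descent (sw i \<circ> w) j \<longleftrightarrow> left_descent w j"
  by (auto simp: left_descent_def inv_sw_comp transpose_def)

lemma reduced_words_far_commuting:
  assumes w: "w permutes {1..n}" and ij: "1 \<le> i" "i + 1 < j" "j < n"
    and di: "left_descent w i" and dj: "left_descent w j"
  obtains z where "reduced n (j # z)" "perm_of_word (j # z) = sw i \<circ> w"
    "reduced n (i # z)" "perm_of_word (i # z) = sw j \<circ> w"
proof -
  have wi: "sw i \<circ> w permutes {1..n}" by (rule sw_comp_permutes[OF w]) (use ij in auto)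
  have wj: "sw j \<circ> w permutes {1..n}" by (rule sw_comp_permutes[OF w]) (use ij in auto)
  have "sw j \<circ> (sw i \<circ> w) permutes {1..n}" by (rule sw_comp_permutes[OF wi]) (use ij in auto)
  then obtain z where z: "reduced n z" "perm_of_word z = sw j \<circ> (sw i \<circ> w)"
    using exists_reduced by blast
  have z': "perm_of_word z = sw i \<circ> (sw j \<circ> w)"
    unfolding z(2) using ij by (auto simp: fun_eq_iff transpose_def)
  have "left_descent (sw i \<circ> w) j" "left_descent (sw j \<circ> w) i"
    using ij di dj left_descent_sw_comp_far[OF w] by auto
  then show thesis
    using that reduced_ConsI[OF z(1) _ _ z(2) wi] reduced_ConsI[OF z(1) _ _ z' wj] ij by auto
qed

lemma reduced_words_braid:
  assumes w: "w permutes {1..n}" and i: "1 \<le> i" "Suc i < n"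
    and di: "left_descent w i" and dj: "left_descent w (Suc i)"
  obtains z where "reduced n (Suc i # i # z)" "perm_of_word (Suc i # i # z) = sw i \<circ> w"
    "reduced n (i # Suc i # z)" "perm_of_word (i # Suc i # z) = sw (Suc i) \<circ> w"
proof -
  define x where "x = sw i \<circ> (sw (Suc i) \<circ> (sw i \<circ> w))"
  have braid: "x = sw (Suc i) \<circ> (sw i \<circ> (sw (Suc i) \<circ> w))"
    unfolding x_def by (auto simp: fun_eq_iff transpose_def)
  have perms: "sw i \<circ> w permutes {1..n}" "sw (Suc i) \<circ> (sw i \<circ> w) permutes {1..n}"
    "sw (Suc i) \<circ> w permutes {1..n}" "sw i \<circ> (sw (Suc i) \<circ> w) permutes {1..n}"
    using sw_comp_permutes[OF w] sw_comp_permutes[OF sw_comp_permutes[OF w]] i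
    by (metis Suc_leD less_imp_le_nat le_add1 plus_1_eq_Suc Suc_le_lessD)+
  have descents: "left_descent (sw i \<circ> w) (Suc i)" "left_descent (sw (Suc i) \<circ> (sw i \<circ> w)) i"
    "left_descent (sw (Suc i) \<circ> w) i" "left_descent (sw i \<circ> (sw (Suc i) \<circ> w)) (Suc i)"
    using di dj perms w
    by (simp_all add: left_descent_def inv_sw_comp transpose_def)
  obtain z where z: "reduced n z" "perm_of_word z = x"
    using exists_reduced[OF sw_comp_permutes[OF perms(2)]] i unfolding x_def by fastforce
  have "reduced n (i # z)" "perm_of_word (i # z) = sw (Suc i) \<circ> (sw i \<circ> w)"
    using reduced_ConsI[OF z(1) _ _ _ perms(2) descents(2)] z(2) i unfolding x_def by auto
  then have 1: "reduced n (Suc i # i # z)" "perm_of_word (Suc i # i # z) = sw i \<circ> w"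
    using reduced_ConsI[OF _ _ _ _ perms(1) descents(1)] i by auto
  have "reduced n (Suc i # z)" "perm_of_word (Suc i # z) = sw i \<circ> (sw (Suc i) \<circ> w)"
    using reduced_ConsI[OF z(1) _ _ _ perms(4) descents(4)] z(2) i braid by auto
  then have 2: "reduced n (i # Suc i # z)" "perm_of_word (i # Suc i # z) = sw (Suc i) \<circ> w"
    using reduced_ConsI[OF _ _ _ _ perms(3) descents(3)] i by auto
  from 1 2 show thesis by (rule that)
qed

lemma lprod_Nil [simp]: "lprod [] = 1"
  by (simp add: lprod_def)

lemma lprod_Cons [simp]: "lprod (x # xs) = x * lprod xs"
  by (simp add: lprod_def)

lemma lprod_append [simp]: "lprod (xs @ ys) = lprod xs * lprod ys"
  by (induction xs) (auto simp: mult.assoc)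

text \<open>Two distinct left descents \<open>k\<close>, \<open>l\<close> of \<open>w\<close> give reduced words \<open>k l \<cdots>\<close> and
  \<open>l k \<cdots>\<close> of \<open>w\<close> whose products agree by a single commutation or braid relation.\<close>
lemma reduced_words_distinct_descents:
  fixes T :: "nat \<Rightarrow> 'a::monoid_mult"
  assumes braid: "\<And>i. 1 \<le> i \<Longrightarrow> Suc i < n \<Longrightarrow> T (Suc i) * T i * T (Suc i) = T i * T (Suc i) * T i"
    and comm: "\<And>i j. i + 1 < j \<Longrightarrow> j < n \<Longrightarrow> T i * T j = T j * T i"
    and w: "w permutes {1..n}" and k: "1 \<le> k" "k < n" "left_descent w k"
    and l: "1 \<le> l" "l < n" "left_descent w l" and "k \<noteq> l"
  obtains z z' where "reduced n (l # z)" "perm_of_word (l # z) = sw k \<circ> w"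
    "reduced n (k # z')" "perm_of_word (k # z') = sw l \<circ> w"
    "T k * lprod (map T (l # z)) = T l * lprod (map T (k # z'))"
proof -
  consider "k + 1 < l" | "l + 1 < k" | "l = Suc k" | "k = Suc l" using \<open>k \<noteq> l\<close> by linarith
  then show thesis
  proof cases
    case 1
    obtain z where "reduced n (l # z)" "perm_of_word (l # z) = sw k \<circ> w"
      "reduced n (k # z)" "perm_of_word (k # z) = sw l \<circ> w"
      using reduced_words_far_commuting[OF w k(1) 1 l(2) k(3) l(3)] .
    moreover have "T k * lprod (map T (l # z)) = T l * lprod (map T (k # z))"
      using comm[OF 1 l(2)] by (simp add: mult.assoc[symmetric])
    ultimately show thesis by (rule that)
  next
    case 2
    obtain z where "reduced n (k # z)" "perm_of_word (k # z) = sw l \<circ> w"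
      "reduced n (l # z)" "perm_of_word (l # z) = sw k \<circ> w"
      using reduced_words_far_commuting[OF w l(1) 2 k(2) l(3) k(3)] .
    moreover have "T k * lprod (map T (l # z)) = T l * lprod (map T (k # z))"
      using comm[OF 2 k(2)] by (simp add: mult.assoc[symmetric])
    ultimately show thesis using that by blast
  next
    case 3
    have "Suc k < n" "left_descent w (Suc k)" using l 3 by auto
    then obtain z where z: "reduced n (Suc k # k # z)" "perm_of_word (Suc k # k # z) = sw k \<circ> w"
        "reduced n (k # Suc k # z)" "perm_of_word (k # Suc k # z) = sw (Suc k) \<circ> w"
      using reduced_words_braid[OF w k(1) _ k(3)] by blast
    have "T k * lprod (map T (Suc k # k # z)) = T (Suc k) * lprod (map T (k # Suc k # z))"
      using braid[OF k(1) \<open>Suc k < n\<close>] by (simp add: mult.assoc[symmetric])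
    with z show thesis by (rule that[unfolded 3])
  next
    case 4
    have "Suc l < n" "left_descent w (Suc l)" using k 4 by auto
    then obtain z where z: "reduced n (Suc l # l # z)" "perm_of_word (Suc l # l # z) = sw l \<circ> w"
        "reduced n (l # Suc l # z)" "perm_of_word (l # Suc l # z) = sw (Suc l) \<circ> w"
      using reduced_words_braid[OF w l(1) _ l(3)] by blast
    have "T (Suc l) * lprod (map T (l # Suc l # z)) = T l * lprod (map T (Suc l # l # z))"
      using braid[OF l(1) \<open>Suc l < n\<close>] by (simp add: mult.assoc[symmetric])
    with z(3,4,1,2) show thesis by (rule that[unfolded 4])
  qed
qed

theorem reduced_words_same_product:
  fixes T :: "nat \<Rightarrow> 'a::monoid_mult"
  assumes braid: "\<And>i. 1 \<le> i \<Longrightarrow> Suc i < n \<Longrightarrow> T (Suc i) * T i * T (Suc i) = T i * T (Suc i) * T i"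
    and comm: "\<And>i j. i + 1 < j \<Longrightarrow> j < n \<Longrightarrow> T i * T j = T j * T i"
  shows "reduced n ws \<Longrightarrow> reduced n vs \<Longrightarrow> perm_of_word vs = perm_of_word ws \<Longrightarrow>
    lprod (map T ws) = lprod (map T vs)"
proof (induction "length ws" arbitrary: ws vs rule: less_induct)
  case less
  have same_length: "length vs = length ws" using less.prems by (simp add: reduced_def)
  show ?case
  proof (cases ws)
    case Nil
    then show ?thesis using same_length by simp
  next
    case (Cons i u)
    then obtain j v where vs: "vs = j # v" using same_length by (cases vs) auto
    define w where "w = perm_of_word ws"
    have w: "w permutes {1..n}"
      using less.prems(1) perm_of_word_permutes unfolding w_def reduced_def by blast
    have first_letter: "reduced n u'" "perm_of_word u' = sw k \<circ> w" "left_descent w k"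
      "1 \<le> k" "k < n" "length u' < length ws"
      if "k # u' \<in> {ws, vs}" for k u'
    proof -
      have r: "reduced n (k # u')" and p: "perm_of_word (k # u') = w" and l: "length (k # u') = length ws"
        using that less.prems same_length unfolding w_def by auto
      show "perm_of_word u' = sw k \<circ> w" unfolding p[symmetric] by simp
      show "reduced n u'" "left_descent w k" "1 \<le> k" "k < n" "length u' < length ws"
        using reduced_ConsD[OF r] p l by auto
    qed
    have i: "i # u \<in> {ws, vs}" and j: "j # v \<in> {ws, vs}" using Cons vs by auto
    show ?thesis
    proof (cases "i = j")
      case True
      have "lprod (map T u) = lprod (map T v)"
        by (intro less.hyps) (use first_letter[OF i] first_letter[OF j] True in simp_all)
      then show ?thesis using Cons vs True by simp
    next
      case False
      obtain z z' where z: "reduced n (j # z)" "perm_of_word (j # z) = sw i \<circ> w"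
        "reduced n (i # z')" "perm_of_word (i # z') = sw j \<circ> w"
        "T i * lprod (map T (j # z)) = T j * lprod (map T (i # z'))"
        using reduced_words_distinct_descents[of n T, OF braid comm w _ _ _ _ _ _ False]
          first_letter[OF i] first_letter[OF j] by blast
      have "lprod (map T u) = lprod (map T (j # z))"
        by (rule less.hyps) (use first_letter[OF i] z(1,2) in simp_all)
      moreover have "lprod (map T v) = lprod (map T (i # z'))"
        by (rule less.hyps) (use first_letter[OF j] z(3,4) in simp_all)
      ultimately show ?thesis using Cons vs z(5) by simp
    qed
  qed
qed

lemma lprod_map_eq_1: "(\<And>x. x \<in> set xs \<Longrightarrow> f x = 1) \<Longrightarrow> lprod (map f xs) = 1"
  by (induction xs) auto

definition commute :: "'a::monoid_mult \<Rightarrow> 'a \<Rightarrow> bool" where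
  "commute x y \<longleftrightarrow> x * y = y * x"

lemma commute_refl: "commute x x"
  by (simp add: commute_def)

lemma commute_sym: "commute x y \<Longrightarrow> commute y x"
  by (simp add: commute_def)

lemma commute_one [simp]: "commute x 1"
  by (simp add: commute_def)

lemma commute_mult: "commute z x \<Longrightarrow> commute z y \<Longrightarrow> commute z (x * y)"
  unfolding commute_def by (metis mult.assoc)

lemma commute_lprod: "(\<And>y. y \<in> set ys \<Longrightarrow> commute z y) \<Longrightarrow> commute z (lprod ys)"
  by (induction ys) (simp_all add: commute_mult)

lemma commute_power: "commute z y \<Longrightarrow> commute z (y ^ k)"
  by (induction k) (simp_all add: commute_mult)

lemma commute_add: "commute z x \<Longrightarrow> commute z y \<Longrightarrow> commute z (x + (y::'a::ring_1))"
  by (simp add: commute_def algebra_simps)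

lemma commute_diff: "commute z x \<Longrightarrow> commute z y \<Longrightarrow> commute z (x - (y::'a::ring_1))"
  by (simp add: commute_def algebra_simps)

lemma commute_sum: "(\<And>i. i \<in> I \<Longrightarrow> commute z (f i)) \<Longrightarrow> commute z (sum f I :: 'a::ring_1)"
  by (induction I rule: infinite_finite_induct) (simp_all add: commute_add commute_def[of z 0])

lemma commuting_expansion:
  fixes A S L Q g :: "'a::ring_1"
  assumes "A * L = L * A" "S * L = L * S"
  shows "(A + S) * (L - Q + L * g) = A * (L - Q) + (L * (A * g + S + S * g) - S * Q)"
proof -
  have "(A + S) * (L - Q + L * g) = A * (L - Q) + ((A * L) * g + S * L + (S * L) * g - S * Q)"
    by (simp add: algebra_simps)
  then show ?thesis unfolding assms by (simp add: algebra_simps)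
qed

inductive_set lspan :: "('r::comm_ring_1 \<Rightarrow> 'a::ring_1) \<Rightarrow> 'a set \<Rightarrow> 'a set" for emb S where
  lspan_zero: "0 \<in> lspan emb S"
| lspan_scaled: "y \<in> S \<Longrightarrow> emb c * y \<in> lspan emb S"
| lspan_add: "x \<in> lspan emb S \<Longrightarrow> y \<in> lspan emb S \<Longrightarrow> x + y \<in> lspan emb S"

locale central_algebra =
  fixes emb :: "'r::comm_ring_1 \<Rightarrow> 'a::ring_1"
  assumes central_emb: "central_emb emb"
begin

lemma emb_1 [simp]: "emb 1 = 1"
  and emb_add [simp]: "emb (x + y) = emb x + emb y"
  and emb_mult [simp]: "emb (x * y) = emb x * emb y"
  and emb_central: "emb x * z = z * emb x"
  using central_emb unfolding central_emb_def by blast+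

lemma emb_0 [simp]: "emb 0 = 0"
  using emb_add[of 0 0] by simp

lemma emb_uminus [simp]: "emb (- x) = - emb x"
  using emb_add[of "- x" x] by (simp add: eq_neg_iff_add_eq_0)

lemma emb_diff [simp]: "emb (x - y) = emb x - emb y"
  by (metis emb_add emb_uminus diff_conv_add_uminus)

lemma commute_emb: "commute z (emb c)"
  by (simp add: commute_def emb_central)

lemma lspan_base: "y \<in> S \<Longrightarrow> y \<in> lspan emb S"
  using lspan_scaled[of y S emb 1] by simp

lemma lspan_smult: "x \<in> lspan emb S \<Longrightarrow> emb c * x \<in> lspan emb S"
proof (induction rule: lspan.induct)
  case (lspan_scaled y c')
  then show ?case using lspan.lspan_scaled[of y S emb "c * c'"] by (simp add: mult.assoc)
qed (simp_all add: lspan.lspan_zero distrib_left lspan.lspan_add)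

lemma lspan_uminus: "x \<in> lspan emb S \<Longrightarrow> - x \<in> lspan emb S"
  using lspan_smult[of x S "- 1"] by simp

lemma lspan_diff: "x \<in> lspan emb S \<Longrightarrow> y \<in> lspan emb S \<Longrightarrow> x - y \<in> lspan emb S"
  unfolding diff_conv_add_uminus by (intro lspan_add lspan_uminus)

lemma lspan_sum: "(\<And>i. i \<in> I \<Longrightarrow> f i \<in> lspan emb S) \<Longrightarrow> sum f I \<in> lspan emb S"
  by (induction I rule: infinite_finite_induct) (auto intro: lspan_zero lspan_add)

lemma lspan_subset_lspan:
  assumes "x \<in> lspan emb S" and "\<And>y. y \<in> S \<Longrightarrow> y \<in> lspan emb S'"
  shows "x \<in> lspan emb S'"
  using assms(1) by induction (simp_all add: lspan_zero lspan_add lspan_smult assms(2))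

lemma lspan_mono: "x \<in> lspan emb S \<Longrightarrow> S \<subseteq> S' \<Longrightarrow> x \<in> lspan emb S'"
  by (erule lspan_subset_lspan) (auto intro: lspan_base)

lemma lspan_mult_left:
  assumes "x \<in> lspan emb S" and "\<And>y. y \<in> S \<Longrightarrow> z * y \<in> lspan emb S'"
  shows "z * x \<in> lspan emb S'"
  using assms(1)
proof induction
  case (lspan_scaled y c)
  have "z * (emb c * y) = emb c * (z * y)" by (metis emb_central mult.assoc)
  then show ?case using lspan_smult assms(2) lspan_scaled by simp
qed (simp_all add: lspan_zero distrib_left lspan_add)

lemma lspan_mult_right:
  assumes "x \<in> lspan emb S" and "\<And>y. y \<in> S \<Longrightarrow> y * z \<in> lspan emb S'"
  shows "x * z \<in> lspan emb S'"
  using assms(1)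
proof induction
  case (lspan_scaled y c)
  then show ?case using lspan_smult assms(2) by (simp add: mult.assoc)
qed (simp_all add: lspan_zero distrib_right lspan_add)

lemma lspan_mult:
  assumes "x \<in> lspan emb S" "y \<in> lspan emb S'"
    and "\<And>x y. x \<in> S \<Longrightarrow> y \<in> S' \<Longrightarrow> x * y \<in> lspan emb S''"
  shows "x * y \<in> lspan emb S''"
  using assms(1) by (rule lspan_mult_right) (auto intro: lspan_mult_left assms(2,3))

lemma lspan_commute:
  assumes "x \<in> lspan emb S" and "\<And>y. y \<in> S \<Longrightarrow> commute z y"
  shows "commute z x"
  using assms(1)
  by induction (simp_all add: commute_mult commute_emb commute_add assms(2) commute_def[of z 0])

lemma lspan_subset_rspan: "x \<in> lspan emb S \<Longrightarrow> x \<in> rspan emb S"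
proof (induction rule: lspan.induct)
  case lspan_zero
  show ?case unfolding rspan_def by (rule CollectI, rule exI[of _ "{}"]) simp
next
  case (lspan_scaled y c)
  show ?case unfolding rspan_def
    by (rule CollectI, rule exI[of _ "{y}"], rule exI[of _ "\<lambda>_. c"]) (simp add: lspan_scaled)
next
  case (lspan_add x y)
  obtain F1 g1 where 1: "finite F1" "F1 \<subseteq> S" "x = (\<Sum>y\<in>F1. emb (g1 y) * y)"
    using lspan_add(3) unfolding rspan_def by blast
  obtain F2 g2 where 2: "finite F2" "F2 \<subseteq> S" "y = (\<Sum>y\<in>F2. emb (g2 y) * y)"
    using lspan_add(4) unfolding rspan_def by blast
  define g1' where "g1' y = (if y \<in> F1 then g1 y else 0)" for y
  define g2' where "g2' y = (if y \<in> F2 then g2 y else 0)" for y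
  have "x = (\<Sum>z\<in>F1 \<union> F2. emb (g1' z) * z)"
    unfolding 1(3) g1'_def by (rule sum.mono_neutral_cong_left) (use 1(1,2) 2(1,2) in auto)
  moreover have "y = (\<Sum>z\<in>F1 \<union> F2. emb (g2' z) * z)"
    unfolding 2(3) g2'_def by (rule sum.mono_neutral_cong_left) (use 1(1,2) 2(1,2) in auto)
  ultimately
  have "x + y = (\<Sum>z\<in>F1 \<union> F2. emb (g1' z + g2' z) * z)"
    by (simp add: sum.distrib distrib_right)
  then show ?case unfolding rspan_def
    by (intro CollectI exI[of _ "F1 \<union> F2"] exI[of _ "\<lambda>z. g1' z + g2' z"] conjI) (use 1 2 in auto)
qed

end

section \<open>Jucys--Murphy elements\<close>

locale ariki_koike =
  fixes emb :: "'r::comm_ring_1 \<Rightarrow> 'a::ring_1" and n r :: nat and q qinv :: 'r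
    and Qs :: "nat \<Rightarrow> 'r" and T :: "nat \<Rightarrow> 'a"
  assumes rels: "AK_rels emb n r q qinv Qs T"
begin

sublocale central_algebra emb
  using rels by unfold_locales (simp add: AK_rels_def)

abbreviation L :: "nat \<Rightarrow> 'a" where "L \<equiv> AK_L emb qinv T"

abbreviation Tword :: "nat list \<Rightarrow> 'a" where "Tword ws \<equiv> lprod (map T ws)"

lemma emb_left_commute: "emb c * (x * y) = x * (emb c * y)"
  by (metis emb_central mult.assoc)

lemma qinv_q: "emb qinv * emb q = 1"
  using rels emb_mult[of qinv q] by (simp add: AK_rels_def mult.commute)

lemma braid:
  assumes "1 \<le> i" "Suc i < n"
  shows "T (Suc i) * T i * T (Suc i) = T i * T (Suc i) * T i"
proof -
  have "\<forall>i. 1 \<le> i \<and> i \<le> n - 2 \<longrightarrow> T (i+1) * T i * T (i+1) = T i * T (i+1) * T i"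
    using rels unfolding AK_rels_def by (elim conjE) assumption
  then show ?thesis using assms by simp
qed

lemma T_commute:
  assumes "i + 1 < j" "j < n"
  shows "T i * T j = T j * T i"
proof -
  have "\<forall>i j. i + 1 < j \<and> j \<le> n - 1 \<longrightarrow> T i * T j = T j * T i"
    using rels unfolding AK_rels_def by (elim conjE) assumption
  moreover have "j \<le> n - 1" using assms by simp
  ultimately show ?thesis using assms by blast
qed

lemma commute_T_T: "i + 1 < j \<Longrightarrow> j < n \<Longrightarrow> commute (T i) (T j)"
  unfolding commute_def by (rule T_commute)

lemma T_mult_T_shifted:
  assumes "1 \<le> i" "i < n"
  shows "T i * (T i + emb q - 1) = emb q" and "(T i + emb q - 1) * T i = emb q"
proof -
  have "\<forall>i. 1 \<le> i \<and> i \<le> n - 1 \<longrightarrow> (T i + emb q) * (T i - 1) = 0"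
    using rels unfolding AK_rels_def by (elim conjE) assumption
  then have "(T i + emb q) * (T i - 1) = 0" using assms by simp
  then show "T i * (T i + emb q - 1) = emb q" "(T i + emb q - 1) * T i = emb q"
    by (simp_all add: algebra_simps emb_central[of q "T i"])
qed

lemma T_square: "1 \<le> i \<Longrightarrow> i < n \<Longrightarrow> T i * T i = emb (1 - q) * T i + emb q"
  using T_mult_T_shifted(1)[of i] by (simp add: algebra_simps emb_central[of q "T i"])

lemma L_1: "L (Suc 0) = T 0"
  by (simp add: AK_L_def)

lemma L_Suc:
  assumes "1 \<le> m"
  shows "L (Suc m) = emb qinv * (T m * L m * T m)"
proof -
  define W where "W = Tword (rev [1..<m] @ [0] @ [1..<m])"
  have "[1..<Suc m] = [1..<m] @ [m]" using assms by simp
  then have "Tword (rev [1..<Suc m] @ [0] @ [1..<Suc m]) = T m * W * T m"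
    by (simp add: W_def mult.assoc)
  moreover have "qinv ^ (Suc m - 1) = qinv * qinv ^ (m - 1)" using assms by (cases m) auto
  ultimately have "L (Suc m) = emb qinv * (emb (qinv ^ (m - 1)) * (T m * (W * T m)))"
    by (simp add: AK_L_def mult.assoc)
  also have "\<dots> = emb qinv * (T m * (emb (qinv ^ (m - 1)) * W) * T m)"
    by (simp only: emb_left_commute[of "qinv ^ (m - 1)" "T m"] mult.assoc)
  also have "\<dots> = emb qinv * (T m * L m * T m)"
    by (simp add: AK_L_def W_def)
  finally show ?thesis .
qed

lemma commute_T0_L: "1 \<le> m \<Longrightarrow> m \<le> n \<Longrightarrow> commute (T 0) (L m)"
proof (induction m rule: nat_induct_at_least)
  case base
  then show ?case by (simp add: L_1 commute_refl)
next
  case (Suc m)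
  show ?case
  proof (cases "m = 1")
    case True
    have "T 0 * T 1 * T 0 * T 1 = T 1 * T 0 * T 1 * T 0"
      using rels unfolding AK_rels_def by (elim conjE)
    then have "commute (T 0) (T 1 * L 1 * T 1)" by (simp add: commute_def L_1 mult.assoc)
    then show ?thesis using True L_Suc[of 1] by (simp add: commute_mult commute_emb)
  next
    case False
    then have "commute (T 0) (T m)" using Suc by (intro commute_T_T) auto
    then show ?thesis using L_Suc[of m] Suc by (simp add: commute_mult commute_emb)
  qed
qed

lemma commute_T_L_below:
  assumes "1 \<le> m" "m < i" "i < n"
  shows "commute (T i) (L m)"
  unfolding AK_L_def
proof (intro commute_mult commute_emb commute_lprod)
  fix y assume "y \<in> set (map T (rev [1..<m] @ [0] @ [1..<m]))"
  then obtain x where "y = T x" "x + 1 < i" using assms(1,2) by auto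
  then show "commute (T i) y" using commute_T_T[of x i] assms(3) commute_sym by blast
qed

lemma commute_T_L_Suc_Suc:
  assumes "1 \<le> i" "i + 2 \<le> n"
  shows "commute (T i) (L (i + 2))"
proof -
  have b: "T (i+1) * T i * T (i+1) = T i * T (i+1) * T i" using braid assms by simp
  have lo: "T (i+1) * L i = L i * T (i+1)"
    using commute_T_L_below[of i "i+1"] assms by (simp add: commute_def)
  have "T i * (T (i+1) * T i * L i * T i * T (i+1)) = (T i * T (i+1) * T i) * (L i * T i * T (i+1))"
    by (simp only: mult.assoc)
  also have "\<dots> = (T (i+1) * T i * T (i+1)) * (L i * T i * T (i+1))" by (simp only: b)
  also have "\<dots> = T (i+1) * T i * (T (i+1) * L i) * (T i * T (i+1))" by (simp only: mult.assoc)
  also have "\<dots> = T (i+1) * T i * (L i * T (i+1)) * (T i * T (i+1))" by (simp only: lo)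
  also have "\<dots> = (T (i+1) * T i * L i) * (T (i+1) * T i * T (i+1))" by (simp only: mult.assoc)
  also have "\<dots> = (T (i+1) * T i * L i) * (T i * T (i+1) * T i)" by (simp only: b)
  also have "\<dots> = (T (i+1) * T i * L i * T i * T (i+1)) * T i" by (simp only: mult.assoc)
  finally have "commute (T i) (T (i+1) * T i * L i * T i * T (i+1))" by (simp add: commute_def)
  moreover have "L (i + 2) = emb qinv * (emb qinv * (T (i+1) * T i * L i * T i * T (i+1)))"
    using L_Suc[of "i+1"] L_Suc[of i] assms
    by (simp add: mult.assoc emb_left_commute[of qinv "T (Suc i)"])
  ultimately show ?thesis by (simp add: commute_mult commute_emb)
qed

lemma commute_T_L_above:
  assumes "1 \<le> i" "i + 2 \<le> m" "m \<le> n"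
  shows "commute (T i) (L m)"
  using assms(2,3)
proof (induction m rule: nat_induct_at_least)
  case base
  then show ?case using commute_T_L_Suc_Suc assms(1) by simp
next
  case (Suc m)
  then have "commute (T i) (T m)" "commute (T i) (L m)" using assms(1) by (auto intro: commute_T_T)
  then show ?case using L_Suc[of m] Suc assms(1) by (simp add: commute_mult commute_emb)
qed

lemma commute_L_L_less:
  assumes "1 \<le> i" "i < j" "j \<le> n"
  shows "commute (L j) (L i)"
  unfolding AK_L_def[of _ _ _ i]
proof (intro commute_mult commute_emb commute_lprod)
  fix y assume "y \<in> set (map T (rev [1..<i] @ [0] @ [1..<i]))"
  then obtain x where x: "y = T x" "x = 0 \<or> (1 \<le> x \<and> x + 2 \<le> j)" using assms(2) by auto
  have "commute (T x) (L j)"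
    using x(2) assms commute_T0_L[of j] commute_T_L_above[of x j] by auto
  then show "commute (L j) y" using x(1) commute_sym by blast
qed

lemma commute_L_L: "1 \<le> i \<Longrightarrow> i \<le> n \<Longrightarrow> 1 \<le> j \<Longrightarrow> j \<le> n \<Longrightarrow> commute (L j) (L i)"
  using commute_L_L_less[of i j] commute_L_L_less[of j i]
  by (cases i j rule: linorder_cases) (auto intro: commute_refl commute_sym)

lemma T_mult_L:
  assumes "1 \<le> i" "i < n"
  shows "T i * L i = L (Suc i) * (T i + emb q - 1)"
proof -
  have "L (Suc i) * (T i + emb q - 1) = emb qinv * (T i * L i * (T i * (T i + emb q - 1)))"
    using L_Suc[of i] assms by (simp add: mult.assoc)
  also have "\<dots> = emb qinv * (emb q * (T i * L i))"
    using T_mult_T_shifted(1)[OF assms] by (simp add: emb_central[of q "T i * L i"])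
  also have "\<dots> = T i * L i"
    by (simp only: mult.assoc[symmetric] qinv_q mult_1_left)
  finally show ?thesis ..
qed

section \<open>The subalgebras \<open>H(\<SS>\<^sub>m)\<close>\<close>

definition hecke :: "nat \<Rightarrow> 'a set" where
  "hecke m = lspan emb {Tword ws | ws. set ws \<subseteq> {1..<m}}"

lemma hecke_Tword: "set ws \<subseteq> {1..<m} \<Longrightarrow> Tword ws \<in> hecke m"
  unfolding hecke_def by (rule lspan_base) blast

lemma hecke_one: "1 \<in> hecke m"
  using hecke_Tword[of "[]" m] by simp

lemma hecke_T: "1 \<le> i \<Longrightarrow> i < m \<Longrightarrow> T i \<in> hecke m"
  using hecke_Tword[of "[i]" m] by simp

lemma hecke_zero: "0 \<in> hecke m"
  unfolding hecke_def by (rule lspan_zero)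

lemma hecke_add: "x \<in> hecke m \<Longrightarrow> y \<in> hecke m \<Longrightarrow> x + y \<in> hecke m"
  unfolding hecke_def by (rule lspan_add)

lemma hecke_diff: "x \<in> hecke m \<Longrightarrow> y \<in> hecke m \<Longrightarrow> x - y \<in> hecke m"
  unfolding hecke_def by (rule lspan_diff)

lemma hecke_smult: "x \<in> hecke m \<Longrightarrow> emb c * x \<in> hecke m"
  unfolding hecke_def by (rule lspan_smult)

lemma hecke_emb: "emb c \<in> hecke m"
  using hecke_smult[OF hecke_one, of c m] by simp

lemma hecke_mult: "x \<in> hecke m \<Longrightarrow> y \<in> hecke m \<Longrightarrow> x * y \<in> hecke m"
  unfolding hecke_def
proof (rule lspan_mult)
  fix x y assume "x \<in> {Tword ws |ws. set ws \<subseteq> {1..<m}}" "y \<in> {Tword ws |ws. set ws \<subseteq> {1..<m}}"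
  then obtain ws vs where "x = Tword ws" "y = Tword vs" "set (ws @ vs) \<subseteq> {1..<m}" by auto
  then show "x * y \<in> lspan emb {Tword ws |ws. set ws \<subseteq> {1..<m}}"
    using hecke_Tword[of "ws @ vs" m] unfolding hecke_def by simp
qed

lemma hecke_mono: "x \<in> hecke m \<Longrightarrow> m \<le> m' \<Longrightarrow> x \<in> hecke m'"
  unfolding hecke_def by (erule lspan_mono) fastforce

lemma hecke_lprod: "(\<And>y. y \<in> set ys \<Longrightarrow> y \<in> hecke m) \<Longrightarrow> lprod ys \<in> hecke m"
  by (induction ys) (auto intro: hecke_one hecke_mult)

lemma commute_hecke:
  assumes "x \<in> hecke m" and "\<And>i. 1 \<le> i \<Longrightarrow> i < m \<Longrightarrow> commute z (T i)"
  shows "commute z x"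
  using assms(1) unfolding hecke_def
proof (rule lspan_commute)
  fix y assume "y \<in> {Tword ws |ws. set ws \<subseteq> {1..<m}}"
  then show "commute z y" using assms(2) by (auto intro!: commute_lprod simp: subset_iff)
qed

lemma Tword_left_invertible:
  assumes "set ws \<subseteq> {1..<m}" "m \<le> n"
  obtains U where "U \<in> hecke m" "U * Tword ws = 1"
  using assms(1)
proof (induction ws arbitrary: thesis)
  case Nil
  then show ?case using hecke_one by fastforce
next
  case (Cons i ws)
  obtain U where U: "U \<in> hecke m" "U * Tword ws = 1" using Cons by auto
  have i: "1 \<le> i" "i < m" using Cons.prems by auto
  \<comment> \<open>the quadratic relation gives \<open>T\<^sub>i\<^sup>-\<^sup>1 = q\<^sup>-\<^sup>1 (T\<^sub>i + q - 1)\<close>\<close>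
  define Ti' where "Ti' = emb qinv * (T i + emb q - 1)"
  have "Ti' * T i = 1"
    using T_mult_T_shifted(2)[of i] i assms(2) qinv_q by (simp add: Ti'_def mult.assoc)
  then have "(U * Ti') * Tword (i # ws) = 1"
    using U(2) by (simp add: mult.assoc[of U Ti'] mult.assoc[of Ti', symmetric])
  moreover have "U * Ti' \<in> hecke m"
    unfolding Ti'_def using U(1) i
    by (intro hecke_mult hecke_smult hecke_diff hecke_add hecke_T hecke_emb hecke_one)
  ultimately show ?case using Cons.prems(1) by blast
qed

lemma Tw_eq_Tword: "reduced n ws \<Longrightarrow> Tw n T (perm_of_word ws) = Tword ws"
proof -
  assume ws: "reduced n ws"
  define w where "w = perm_of_word ws"
  have w: "w permutes {1..n}"
    using perm_of_word_permutes ws unfolding reduced_def w_def by blast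
  define vs where "vs = (SOME ws. reduced_word n w ws)"
  have "reduced_word n w vs"
    unfolding vs_def using exists_reduced[OF w] reduced_word_iff[OF w] reduced_def
    by (metis (mono_tags, lifting) someI_ex)
  then have "reduced n vs" "perm_of_word vs = w"
    using reduced_word_iff[OF w] by (auto simp: reduced_def)
  then have "Tword vs = Tword ws"
    using reduced_words_same_product[of n T, OF braid T_commute] ws unfolding w_def by metis
  then show "Tw n T (perm_of_word ws) = Tword ws" by (simp add: Tw_def vs_def w_def)
qed

lemma T_mult_Tw:
  assumes k: "k \<le> n" and w: "w permutes {1..k}" and i: "1 \<le> i" "i < k"
  shows "T i * Tw n T w \<in> lspan emb (Tw n T ` {v. v permutes {1..k}})"
proof -
  have wn: "w permutes {1..n}" using permutes_subset[OF w] k by auto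
  have in_span: "Tw n T v \<in> lspan emb (Tw n T ` {v. v permutes {1..k}})" if "v permutes {1..k}" for v
    using that by (intro lspan_base) blast
  have swk: "sw i \<circ> w permutes {1..k}" by (rule sw_comp_permutes[OF w]) (use i in auto)
  have swn: "sw i \<circ> w permutes {1..n}" by (rule sw_comp_permutes[OF wn]) (use i k in auto)
  show ?thesis
  proof (cases "left_descent w i")
    case False
    obtain ws where ws: "reduced n ws" "perm_of_word ws = w" using exists_reduced[OF wn] by blast
    have "left_descent (sw i \<circ> w) i" using False left_descent_sw_comp_self[OF wn] by blast
    moreover have "perm_of_word ws = sw i \<circ> (sw i \<circ> w)" using ws(2) by simp
    ultimately have "reduced n (i # ws)"
      using reduced_ConsI(1)[OF ws(1) _ _ _ swn] i k by simp
    then have "Tw n T (sw i \<circ> w) = T i * Tword ws" using Tw_eq_Tword ws(2) by fastforce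
    moreover have "Tw n T w = Tword ws" using Tw_eq_Tword[OF ws(1)] ws(2) by simp
    ultimately show ?thesis using in_span[OF swk] by simp
  next
    case True
    obtain zs where zs: "reduced n zs" "perm_of_word zs = sw i \<circ> w" using exists_reduced[OF swn] by blast
    have "reduced n (i # zs)" using reduced_ConsI(1)[OF zs(1) _ _ zs(2) wn True] i k by simp
    then have "Tw n T w = T i * Tword zs" using Tw_eq_Tword zs(2) by fastforce
    moreover have "Tw n T (sw i \<circ> w) = Tword zs" using Tw_eq_Tword[OF zs(1)] zs(2) by simp
    ultimately have Tw_w: "Tw n T w = T i * Tw n T (sw i \<circ> w)" by simp
    then have "T i * Tw n T w = (T i * T i) * Tw n T (sw i \<circ> w)" by (simp add: mult.assoc)
    also have "\<dots> = emb (1 - q) * Tw n T w + emb q * Tw n T (sw i \<circ> w)"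
      using T_square[of i] i k Tw_w by (simp add: distrib_right mult.assoc)
    finally show ?thesis
      by (rule ssubst) (intro lspan_add lspan_smult in_span w swk)
  qed
qed

lemma Tword_in_span_Tw:
  assumes "k \<le> n"
  shows "set ws \<subseteq> {1..<k} \<Longrightarrow> Tword ws \<in> lspan emb (Tw n T ` {v. v permutes {1..k}})"
proof (induction ws)
  case Nil
  have "Tw n T (perm_of_word []) = Tword []" by (rule Tw_eq_Tword) (simp add: reduced_def)
  then have "1 \<in> Tw n T ` {v. v permutes {1..k}}"
    by (intro image_eqI[of 1 _ id]) (simp_all add: permutes_id)
  then show ?case by (simp add: lspan_base)
next
  case (Cons i ws)
  then have "Tword ws \<in> lspan emb (Tw n T ` {v. v permutes {1..k}})" by simp
  then have "T i * Tword ws \<in> lspan emb (Tw n T ` {v. v permutes {1..k}})"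
    by (rule lspan_mult_left) (use Cons.prems T_mult_Tw[OF assms] in auto)
  then show ?case by simp
qed

lemma hecke_subset_span_Tw:
  assumes "x \<in> hecke k" "k \<le> n"
  shows "x \<in> lspan emb (Tw n T ` {v. v permutes {1..k}})"
  using assms(1) unfolding hecke_def
  by (rule lspan_subset_lspan) (blast intro: Tword_in_span_Tw[OF assms(2)])


section \<open>Moving \<open>L\<^sub>j - Q\<close> through \<open>T\<^bsub>w\<^sub>a\<^sub>,\<^sub>b\<^esub>\<close>\<close>

lemma Tij_split:
  assumes "s \<le> k" "k \<le> e"
  shows "Tij T s e = Tword [s..<k] * T k * Tword [Suc k..<Suc e]"
proof -
  have "[s..<Suc e] = [s..<k] @ k # [Suc k..<Suc e]"
    using assms by (metis le_SucI upt_add_eq_append le_add_diff_inverse upt_conv_Cons le_imp_less_Suc)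
  then show ?thesis by (simp add: Tij_def mult.assoc)
qed

lemma commute_L_Tword_above:
  assumes "1 \<le> m" "set ws \<subseteq> {Suc m..<n}"
  shows "commute (L m) (Tword ws)"
proof (rule commute_lprod)
  fix y assume "y \<in> set (map T ws)"
  then obtain i where "y = T i" "m < i" "i < n" using assms(2) by auto
  then show "commute (L m) y" using commute_T_L_below[of m i] assms(1) commute_sym by blast
qed

lemma commute_L_Tword_below:
  assumes "m \<le> n" "set ws \<subseteq> {1..<m - 1}"
  shows "commute (L m) (Tword ws)"
proof (rule commute_lprod)
  fix y assume "y \<in> set (map T ws)"
  then obtain i where "y = T i" "i \<in> set ws" by auto
  moreover have "1 \<le> i" "i + 2 \<le> m" using assms(2) \<open>i \<in> set ws\<close> by force+
  ultimately show "commute (L m) y" using commute_T_L_above[of i m] assms(1) commute_sym by auto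
qed

lemma commute_hecke_Tword_above:
  assumes "x \<in> hecke k" "set ws \<subseteq> {Suc k..<n}"
  shows "commute x (Tword ws)"
proof (rule commute_sym, rule commute_hecke[OF assms(1)])
  fix i assume "1 \<le> i" "i < k"
  show "commute (Tword ws) (T i)"
    by (rule commute_sym, rule commute_lprod) (use \<open>i < k\<close> assms(2) in \<open>auto intro!: commute_T_T\<close>)
qed

text \<open>The heart of the argument: conjugating by \<open>T\<^sub>s \<cdots> T\<^sub>e\<close> shifts \<open>L\<^sub>k\<close> to \<open>L\<^sub>k\<^sub>+\<^sub>1\<close>,
  at the price of a factor from \<open>H(\<SS>\<^sub>k\<^sub>+\<^sub>1)\<close>.\<close>
lemma Tij_mult_L_mult_hecke:
  assumes s: "1 \<le> s" "s \<le> k" and e: "k \<le> e" "e < n" and x: "x \<in> hecke k"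
  obtains x' where "x' \<in> hecke (Suc k)" "Tij T s e * (L k * x) = L (Suc k) * x' * Tij T s e"
proof -
  define A where "A = Tword [s..<k]"
  define B where "B = Tword [Suc k..<Suc e]"
  have k: "1 \<le> k" "k < n" using s e by auto
  have BL: "commute (L k) B" unfolding B_def using k e by (intro commute_L_Tword_above) auto
  have Bx: "commute x B" unfolding B_def using x e by (intro commute_hecke_Tword_above) auto
  have AL: "commute (L (Suc k)) A" unfolding A_def using k s by (intro commute_L_Tword_below) auto
  obtain U where U: "U \<in> hecke (Suc k)" "U * (A * T k) = 1"
    using Tword_left_invertible[of "[s..<Suc k]" "Suc k"] s k unfolding A_def by auto
  define x' where "x' = A * (T k + emb q - 1) * x * U"
  have split: "Tij T s e = A * T k * B"
    unfolding Tij_split[OF s(2) e(1)] A_def B_def ..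
  have "Tij T s e * (L k * x) = A * T k * (B * L k) * x"
    unfolding split by (simp only: mult.assoc)
  also have "\<dots> = A * (T k * L k) * (B * x)"
    unfolding BL[unfolded commute_def, symmetric] by (simp only: mult.assoc)
  also have "\<dots> = (A * L (Suc k)) * (T k + emb q - 1) * x * B"
    unfolding T_mult_L[OF k] Bx[unfolded commute_def, symmetric] by (simp only: mult.assoc)
  also have "\<dots> = L (Suc k) * (A * (T k + emb q - 1) * x) * (U * (A * T k)) * B"
    unfolding AL[unfolded commute_def, symmetric] U(2) by (simp only: mult.assoc mult_1_left)
  also have "\<dots> = L (Suc k) * x' * Tij T s e"
    unfolding split x'_def by (simp only: mult.assoc)
  finally show thesis
  proof (rule that[rotated])
    show "x' \<in> hecke (Suc k)" unfolding x'_def A_def using s k x U(1)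
      by (intro hecke_mult hecke_diff hecke_add hecke_T hecke_emb hecke_one hecke_Tword)
        (auto elim: hecke_mono)
  qed
qed

lemma Tij_mult_L_minus:
  assumes "1 \<le> s" "s \<le> k" "k \<le> e" "e < n" "h \<in> hecke k"
  obtains h' where "h' \<in> hecke (Suc k)"
    "Tij T s e * (L k - emb Q + L k * h) = (L (Suc k) - emb Q + L (Suc k) * h') * Tij T s e"
proof -
  obtain x' where x': "x' \<in> hecke (Suc k)" "Tij T s e * (L k * (1 + h)) = L (Suc k) * x' * Tij T s e"
    using Tij_mult_L_mult_hecke[OF assms(1-4) hecke_add[OF hecke_one assms(5)]] .
  have "Tij T s e * (L k - emb Q + L k * h) = Tij T s e * (L k * (1 + h)) - Tij T s e * emb Q"
    by (simp add: algebra_simps)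
  also have "\<dots> = (L (Suc k) - emb Q + L (Suc k) * (x' - 1)) * Tij T s e"
    unfolding x'(2) by (simp add: algebra_simps emb_central[of Q, symmetric])
  finally show thesis using that x'(1) hecke_diff hecke_one by blast
qed

lemma Twab_Suc:
  assumes "1 \<le> b"
  shows "Twab T (Suc a) b = Tij T (Suc a) (a + b) * Twab T a b"
proof -
  have "[0..<Suc a] = 0 # map Suc [0..<a]" by (simp add: upt_conv_Cons map_Suc_upt)
  then have "Twab T (Suc a) b =
      Tij T (Suc a) (a + b) * lprod (map (\<lambda>t. Tij T (a - t) (a + b - 1 - t)) [0..<a])"
    using assms by (simp add: Twab_def o_def)
  then show ?thesis using assms by (cases "a = 0") (simp_all add: Twab_def)
qed

lemma Twab_mult_L_minus:
  assumes j: "1 \<le> j" "j \<le> b" and ab: "a + b \<le> n"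
  obtains h where "h \<in> hecke (a + j)"
    "Twab T a b * (L j - emb Q) = (L (a + j) - emb Q + L (a + j) * h) * Twab T a b"
  using ab
proof (induction a arbitrary: thesis)
  case 0
  show ?case by (rule 0(1)[of 0]) (simp_all add: hecke_zero Twab_def)
next
  case (Suc a)
  obtain h where h: "h \<in> hecke (a + j)"
    "Twab T a b * (L j - emb Q) = (L (a + j) - emb Q + L (a + j) * h) * Twab T a b"
    using Suc by auto
  obtain h' where h': "h' \<in> hecke (Suc (a + j))"
    "Tij T (Suc a) (a + b) * (L (a + j) - emb Q + L (a + j) * h) =
      (L (Suc (a + j)) - emb Q + L (Suc (a + j)) * h') * Tij T (Suc a) (a + b)"
    using Tij_mult_L_minus[of "Suc a" "a + j" "a + b" h] h(1) j Suc.prems by auto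
  have "Twab T (Suc a) b * (L j - emb Q) = Tij T (Suc a) (a + b) * (Twab T a b * (L j - emb Q))"
    using Twab_Suc j by (simp add: mult.assoc)
  also have "\<dots> = (L (Suc a + j) - emb Q + L (Suc a + j) * h') * Twab T (Suc a) b"
    unfolding h(2) using h'(2) Twab_Suc j by (simp add: mult.assoc[symmetric])
  finally show ?case using Suc.prems(1) h'(1) by simp
qed

section \<open>Expanding \<open>T\<^bsub>w\<^sub>a\<^sub>,\<^sub>b\<^esub> L\<^bsub>c,d\<^esub>(Q)\<close>\<close>

definition Lmonomial :: "nat \<Rightarrow> (nat \<Rightarrow> nat) \<Rightarrow> 'a" where
  "Lmonomial t c = lprod (map (\<lambda>i. L i ^ c i) [1..<t])"

text \<open>Exponents at most 1 are all the argument produces; this is what puts these elements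
  into \<open>H\<^sub>k\<^sub>-\<^sub>1\<^sub>,\<^sub>k\<close> whenever \<open>r \<ge> 2\<close>.\<close>
definition Lhecke :: "nat \<Rightarrow> nat \<Rightarrow> 'a set" where
  "Lhecke t m = lspan emb {Lmonomial t c * Tword ws | c ws. (\<forall>i. c i \<le> 1) \<and> set ws \<subseteq> {1..<m}}"

lemma Lmonomial_zero: "Lmonomial t (\<lambda>_. 0) = 1"
  unfolding Lmonomial_def by (rule lprod_map_eq_1) simp

lemma Lmonomial_extend:
  "t \<le> t' \<Longrightarrow> Lmonomial t c = Lmonomial t' (\<lambda>i. if i < t then c i else 0)"
proof (induction t' rule: dec_induct)
  case base
  show ?case unfolding Lmonomial_def by (intro arg_cong[where f = lprod] map_cong) auto
next
  case (step t')
  then show ?case by (cases "t' = 0") (simp_all add: Lmonomial_def)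
qed

lemma Lmonomial_Suc: "1 \<le> t \<Longrightarrow> Lmonomial (Suc t) c = Lmonomial t c * L t ^ c t"
  by (simp add: Lmonomial_def)

lemma commute_L_Lmonomial: "t \<le> n \<Longrightarrow> commute (L t) (Lmonomial t c)"
  unfolding Lmonomial_def
  by (rule commute_lprod) (auto intro!: commute_power commute_L_L)

lemma Lhecke_gen: "\<forall>i. c i \<le> 1 \<Longrightarrow> set ws \<subseteq> {1..<m} \<Longrightarrow> Lmonomial t c * Tword ws \<in> Lhecke t m"
  unfolding Lhecke_def by (rule lspan_base) blast

lemma Lhecke_add: "x \<in> Lhecke t m \<Longrightarrow> y \<in> Lhecke t m \<Longrightarrow> x + y \<in> Lhecke t m"
  unfolding Lhecke_def by (rule lspan_add)

lemma Lhecke_diff: "x \<in> Lhecke t m \<Longrightarrow> y \<in> Lhecke t m \<Longrightarrow> x - y \<in> Lhecke t m"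
  unfolding Lhecke_def by (rule lspan_diff)

lemma Lhecke_smult: "x \<in> Lhecke t m \<Longrightarrow> emb c * x \<in> Lhecke t m"
  unfolding Lhecke_def by (rule lspan_smult)

lemma Lhecke_sum: "(\<And>i. i \<in> I \<Longrightarrow> f i \<in> Lhecke t m) \<Longrightarrow> sum f I \<in> Lhecke t m"
  unfolding Lhecke_def by (rule lspan_sum)

lemma hecke_subset_Lhecke:
  assumes "x \<in> hecke m"
  shows "x \<in> Lhecke t m"
  using assms unfolding hecke_def Lhecke_def
proof (rule lspan_subset_lspan)
  fix y assume "y \<in> {Tword ws |ws. set ws \<subseteq> {1..<m}}"
  then obtain ws where "y = Lmonomial t (\<lambda>_. 0) * Tword ws" "set ws \<subseteq> {1..<m}"
    by (auto simp: Lmonomial_zero)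
  then show "y \<in> lspan emb {Lmonomial t c * Tword ws |c ws. (\<forall>i. c i \<le> 1) \<and> set ws \<subseteq> {1..<m}}"
    using Lhecke_gen[of "\<lambda>_. 0" ws m t] unfolding Lhecke_def by simp
qed

lemma Lhecke_mono:
  assumes "x \<in> Lhecke t m" "t \<le> t'" "m \<le> m'"
  shows "x \<in> Lhecke t' m'"
  using assms(1) unfolding Lhecke_def
proof (rule lspan_subset_lspan)
  fix y assume "y \<in> {Lmonomial t c * Tword ws |c ws. (\<forall>i. c i \<le> 1) \<and> set ws \<subseteq> {1..<m}}"
  then obtain c ws where "y = Lmonomial t' (\<lambda>i. if i < t then c i else 0) * Tword ws"
    "\<forall>i. c i \<le> 1" "set ws \<subseteq> {1..<m'}"
    using Lmonomial_extend[OF assms(2)] assms(3) by fastforce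
  then show "y \<in> lspan emb {Lmonomial t' c * Tword ws |c ws. (\<forall>i. c i \<le> 1) \<and> set ws \<subseteq> {1..<m'}}"
    using Lhecke_gen[of "\<lambda>i. if i < t then c i else 0" ws m' t'] by (simp add: Lhecke_def)
qed

lemma Lhecke_mult_hecke: "x \<in> Lhecke t m \<Longrightarrow> y \<in> hecke m \<Longrightarrow> x * y \<in> Lhecke t m"
  unfolding Lhecke_def hecke_def
proof (rule lspan_mult)
  fix x y
  assume "x \<in> {Lmonomial t c * Tword ws |c ws. (\<forall>i. c i \<le> 1) \<and> set ws \<subseteq> {1..<m}}"
    and "y \<in> {Tword ws |ws. set ws \<subseteq> {1..<m}}"
  then obtain c ws vs where x: "x = Lmonomial t c * Tword ws" "\<forall>i. c i \<le> 1" "set ws \<subseteq> {1..<m}"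
    and y: "y = Tword vs" "set vs \<subseteq> {1..<m}"
    by blast
  then have "x * y = Lmonomial t c * Tword (ws @ vs)" by (simp add: mult.assoc)
  then show "x * y \<in> lspan emb {Lmonomial t c * Tword ws |c ws. (\<forall>i. c i \<le> 1) \<and> set ws \<subseteq> {1..<m}}"
    using Lhecke_gen[of c "ws @ vs" m t] x y unfolding Lhecke_def by simp
qed

lemma L_mult_Lhecke:
  assumes t: "1 \<le> t" "t \<le> n" and x: "x \<in> Lhecke t m"
  shows "L t * x \<in> Lhecke (Suc t) m"
  using x unfolding Lhecke_def
proof (rule lspan_mult_left)
  fix y assume "y \<in> {Lmonomial t c * Tword ws |c ws. (\<forall>i. c i \<le> 1) \<and> set ws \<subseteq> {1..<m}}"
  then obtain c ws where y: "y = Lmonomial t c * Tword ws" "\<forall>i. c i \<le> 1" "set ws \<subseteq> {1..<m}"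
    by blast
  have "Lmonomial t (c(t := 1)) = Lmonomial t c"
    unfolding Lmonomial_def by (intro arg_cong[where f = lprod] map_cong) auto
  then have "L t * y = Lmonomial (Suc t) (c(t := 1)) * Tword ws"
    using commute_L_Lmonomial[OF t(2), of c] Lmonomial_Suc[OF t(1), of "c(t := 1)"] y(1)
    by (simp add: commute_def mult.assoc[symmetric])
  then show "L t * y \<in> lspan emb {Lmonomial (Suc t) c * Tword ws |c ws. (\<forall>i. c i \<le> 1) \<and> set ws \<subseteq> {1..<m}}"
    using Lhecke_gen[of "c(t := 1)" ws m "Suc t"] y(2,3) unfolding Lhecke_def by simp
qed

lemma commute_L_Lhecke:
  assumes x: "x \<in> Lhecke k k" and km: "k < m" "m \<le> n"
  shows "commute (L m) x"
  using x unfolding Lhecke_def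
proof (rule lspan_commute)
  fix y assume "y \<in> {Lmonomial k c * Tword ws |c ws. (\<forall>i. c i \<le> 1) \<and> set ws \<subseteq> {1..<k}}"
  then obtain c ws where y: "y = Lmonomial k c * Tword ws" "set ws \<subseteq> {1..<k}" by blast
  have "commute (L m) (Lmonomial k c)"
    unfolding Lmonomial_def using km by (intro commute_lprod) (auto intro!: commute_power commute_L_L)
  moreover have "set ws \<subseteq> {1..<m - 1}" by (rule order.trans[OF y(2)]) (use km in auto)
  then have "commute (L m) (Tword ws)" using km by (intro commute_L_Tword_below) auto
  ultimately show "commute (L m) y" unfolding y(1) by (rule commute_mult)
qed


abbreviation LQ :: "nat \<Rightarrow> nat \<Rightarrow> 'r \<Rightarrow> 'a" where "LQ i j Q \<equiv> Lij emb qinv T i j Q"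

lemma Lij_empty: "j < i \<Longrightarrow> LQ i j Q = 1"
  by (simp add: Lij_def)

lemma Lij_Suc: "i \<le> Suc j \<Longrightarrow> LQ i (Suc j) Q = LQ i j Q * (L (Suc j) - emb Q)"
  by (simp add: Lij_def)

lemma commute_L_Lij:
  assumes "1 \<le> i" "j \<le> n" "1 \<le> m" "m \<le> n"
  shows "commute (L m) (LQ i j Q)"
  unfolding Lij_def using assms
  by (intro commute_lprod) (auto intro!: commute_diff commute_emb commute_L_L)

lemma Lij_mult_Lhecke:
  assumes i: "1 \<le> i" "i \<le> Suc j" and j: "j \<le> n" and g: "g \<in> Lhecke i m"
  shows "LQ i j Q * g \<in> Lhecke (Suc j) m"
proof -
  have "i - 1 \<le> j" using i by simp
  then show ?thesis using j
  proof (induction j rule: dec_induct)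
    case base
    then show ?case using g i by (simp add: Lij_empty)
  next
    case (step j)
    define X where "X = LQ i j Q * g"
    have X: "X \<in> Lhecke (Suc j) m" using step X_def by simp
    have "commute (LQ i j Q) (L (Suc j) - emb Q)"
      using commute_L_Lij[of i j "Suc j" Q] i step.prems
      by (intro commute_diff commute_emb) (auto intro: commute_sym)
    then have "LQ i (Suc j) Q * g = ((L (Suc j) - emb Q) * LQ i j Q) * g"
      using step.hyps(1) i by (simp add: Lij_Suc commute_def)
    also have "\<dots> = L (Suc j) * X - emb Q * X"
      unfolding X_def by (simp add: left_diff_distrib mult.assoc)
    also have "\<dots> \<in> Lhecke (Suc (Suc j)) m"
      using X step.prems i
      by (intro Lhecke_diff L_mult_Lhecke Lhecke_smult) (auto elim: Lhecke_mono)
    finally show ?case .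
  qed
qed

lemma sum_L_mult_Lhecke:
  assumes h: "\<forall>k\<in>{i..j}. h k \<in> Lhecke k k" and "1 \<le> i" "j < m" "m \<le> n"
  shows "(\<Sum>k=i..j. L k * h k) \<in> Lhecke m m"
proof (rule Lhecke_sum)
  fix k assume k: "k \<in> {i..j}"
  have "h k \<in> Lhecke k m"
    by (rule Lhecke_mono[OF h[rule_format, OF k]]) (use k assms in simp_all)
  then have "L k * h k \<in> Lhecke (Suc k) m"
    by (rule L_mult_Lhecke[rotated 2]) (use k assms in simp_all)
  then show "L k * h k \<in> Lhecke m m"
    by (rule Lhecke_mono) (use k assms in simp_all)
qed

lemma commute_L_sum_L_mult_Lhecke:
  assumes "\<forall>k\<in>{i..j}. h k \<in> Lhecke k k" "1 \<le> i" "j < m" "m \<le> n"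
  shows "commute (L m) (\<Sum>k=i..j. L k * h k)"
proof (intro commute_sum commute_mult)
  fix k assume k: "k \<in> {i..j}"
  show "commute (L m) (L k)" using k assms by (intro commute_L_L) auto
  show "commute (L m) (h k)" using k assms by (intro commute_L_Lhecke[of _ k]) auto
qed

lemma Twab_mult_Lij_Suc:
  assumes ab: "a + b \<le> n" and c: "1 \<le> c" "c \<le> Suc d" and d: "Suc d \<le> b"
    and h: "\<forall>k\<in>{a+c..a+d}. h k \<in> Lhecke k k"
    and eq: "Twab T a b * LQ c d Q = (LQ (a+c) (a+d) Q + (\<Sum>k=a+c..a+d. L k * h k)) * Twab T a b"
  obtains h' where "\<forall>k\<in>{a+c..a + Suc d}. h' k \<in> Lhecke k k"
    "Twab T a b * LQ c (Suc d) Q =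
      (LQ (a+c) (a + Suc d) Q + (\<Sum>k=a+c..a + Suc d. L k * h' k)) * Twab T a b"
proof -
  define m where "m = a + Suc d"
  have m: "1 \<le> m" "m \<le> n" "a + c \<le> m" using ab c d unfolding m_def by auto
  obtain g where g: "g \<in> hecke m"
    "Twab T a b * (L (Suc d) - emb Q) = (L m - emb Q + L m * g) * Twab T a b"
    using Twab_mult_L_minus[of "Suc d" b a Q] d ab unfolding m_def by auto
  define A where "A = LQ (a+c) (a+d) Q"
  define S where "S = (\<Sum>k=a+c..a+d. L k * h k)"
  define h' where "h' k = (if k = m then A * g + S + S * g else emb (- Q) * h k)" for k
  have "commute (L m) A" unfolding A_def using c m ab d by (intro commute_L_Lij) (auto simp: m_def)
  then have AL: "A * L m = L m * A" by (simp add: commute_def)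
  have "commute (L m) S" unfolding S_def using h c m by (intro commute_L_sum_L_mult_Lhecke) (auto simp: m_def)
  then have SL: "S * L m = L m * S" by (simp add: commute_def)
  have "S * emb Q = (\<Sum>k=a+c..a+d. L k * (emb Q * h k))"
    unfolding S_def sum_distrib_right by (simp add: mult.assoc emb_central)
  then have sum_h': "(\<Sum>k=a+c..a + Suc d. L k * h' k) = L m * h' m - S * emb Q"
    using m by (simp add: h'_def m_def sum_negf)
  have "Twab T a b * LQ c (Suc d) Q = (A + S) * (Twab T a b * (L (Suc d) - emb Q))"
    using eq c by (simp add: Lij_Suc A_def S_def mult.assoc[symmetric])
  also have "\<dots> = (LQ (a+c) (a + Suc d) Q + (\<Sum>k=a+c..a + Suc d. L k * h' k)) * Twab T a b"
    unfolding g(2) mult.assoc[symmetric] commuting_expansion[OF AL SL] sum_h'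
    using c by (simp add: Lij_Suc A_def h'_def m_def)
  finally have "Twab T a b * LQ c (Suc d) Q = \<dots>" .
  moreover have "\<forall>k\<in>{a+c..a + Suc d}. h' k \<in> Lhecke k k"
  proof
    have "S \<in> Lhecke m m" unfolding S_def using h c m by (intro sum_L_mult_Lhecke) (auto simp: m_def)
    moreover have "A * g \<in> Lhecke (Suc (a + d)) m" unfolding A_def
      by (rule Lij_mult_Lhecke[OF _ _ _ hecke_subset_Lhecke[OF g(1)]]) (use c m in \<open>simp_all add: m_def\<close>)
    ultimately have "h' m \<in> Lhecke m m"
      unfolding h'_def using g(1) by (simp add: Lhecke_add Lhecke_mult_hecke m_def)
    fix k assume "k \<in> {a+c..a + Suc d}"
    then consider "k = m" | "k \<in> {a+c..a+d}" "k \<noteq> m" by (force simp: m_def)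
    then show "h' k \<in> Lhecke k k"
    proof cases
      case 2
      then show ?thesis using h Lhecke_smult[of "h k" k k "- Q"] by (simp add: h'_def)
    qed (use \<open>h' m \<in> Lhecke m m\<close> in simp)
  qed
  ultimately show thesis by (rule that[rotated])
qed

lemma Twab_mult_Lij:
  assumes ab: "a + b \<le> n" and c: "1 \<le> c" "c \<le> Suc d" and d: "d \<le> b"
  obtains h where "\<forall>k\<in>{a+c..a+d}. h k \<in> Lhecke k k"
    "Twab T a b * LQ c d Q = (LQ (a+c) (a+d) Q + (\<Sum>k=a+c..a+d. L k * h k)) * Twab T a b"
proof -
  have "c - 1 \<le> d" using c by simp
  then have "\<exists>h. (\<forall>k\<in>{a+c..a+d}. h k \<in> Lhecke k k) \<and>
    Twab T a b * LQ c d Q = (LQ (a+c) (a+d) Q + (\<Sum>k=a+c..a+d. L k * h k)) * Twab T a b"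
    using d
  proof (induction d rule: dec_induct)
    case base
    then show ?case using c by (intro exI[of _ "\<lambda>_. 0"]) (simp add: Lij_empty)
  next
    case (step d)
    have "d \<le> b" "c \<le> Suc d" using step c(1) by auto
    then obtain h where "\<forall>k\<in>{a+c..a+d}. h k \<in> Lhecke k k"
      "Twab T a b * LQ c d Q = (LQ (a+c) (a+d) Q + (\<Sum>k=a+c..a+d. L k * h k)) * Twab T a b"
      using step.IH by blast
    from Twab_mult_Lij_Suc[OF ab c(1) \<open>c \<le> Suc d\<close> step.prems this] show ?case by blast
  qed
  then show thesis using that by blast
qed

lemma L_in_hecke_if_r_eq_1:
  assumes "r = 1" "1 \<le> i" "i < k"
  shows "L i \<in> hecke k"
proof -
  have "lprod (map (\<lambda>j. T 0 - emb (Qs j)) [1..<r+1]) = 0"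
    using rels unfolding AK_rels_def by (elim conjE)
  then have "T 0 = emb (Qs 1)" using assms(1) by simp
  then have "L i = emb (qinv ^ (i - 1)) * (Tword (rev [1..<i]) * emb (Qs 1) * Tword [1..<i])"
    by (simp add: AK_L_def mult.assoc)
  also have "\<dots> \<in> hecke k"
    using assms(2,3) by (intro hecke_smult hecke_mult hecke_emb hecke_Tword) auto
  finally show ?thesis .
qed

lemma Lhecke_subset_hecke_if_r_eq_1:
  assumes "r = 1" "x \<in> Lhecke k k"
  shows "x \<in> hecke k"
  using assms(2) unfolding Lhecke_def hecke_def
proof (rule lspan_subset_lspan)
  fix y assume "y \<in> {Lmonomial k c * Tword ws |c ws. (\<forall>i. c i \<le> 1) \<and> set ws \<subseteq> {1..<k}}"
  then obtain c ws where y: "y = Lmonomial k c * Tword ws" "set ws \<subseteq> {1..<k}" by blast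
  have "L i ^ j \<in> hecke k" if "1 \<le> i" "i < k" for i j
    using L_in_hecke_if_r_eq_1[OF assms(1) that] by (induction j) (auto intro: hecke_one hecke_mult)
  then have "Lmonomial k c \<in> hecke k" unfolding Lmonomial_def by (auto intro!: hecke_lprod)
  then show "y \<in> lspan emb {Tword ws |ws. set ws \<subseteq> {1..<k}}"
    using hecke_mult[OF _ hecke_Tword[OF y(2)]] y(1) unfolding hecke_def by blast
qed

text \<open>For \<open>r = 1\<close> the exponents \<open>c\<^sub>i < r\<close> in \<open>H\<^sub>k\<^sub>-\<^sub>1\<^sub>,\<^sub>k\<close> must vanish; then \<open>T\<^sub>0\<close> is a
  scalar and every \<open>L\<^sub>i\<close> lies in \<open>H(\<SS>\<^sub>k)\<close> instead.\<close>
lemma Lhecke_subset_Hkm: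
  assumes k: "1 \<le> k" "k \<le> n" and r: "1 \<le> r" and x: "x \<in> Lhecke k k"
  shows "x \<in> Hkm emb n r qinv T (k - 1) k"
proof -
  define gens where "gens = {lprod (map (\<lambda>i. L i ^ c i) [1..<k - 1 + 1]) * Tw n T w | c w.
    (\<forall>i\<in>{1..k - 1}. c i < r) \<and> w permutes {1..k}}"
  have gen: "Lmonomial k c * Tw n T w \<in> lspan emb gens"
    if "\<forall>i. c i < r" "w permutes {1..k}" for c w
    unfolding gens_def Lmonomial_def using that k by (intro lspan_base) auto
  have "x \<in> lspan emb gens"
  proof (cases "r = 1")
    case True
    have "x \<in> lspan emb (Tw n T ` {w. w permutes {1..k}})"
      using Lhecke_subset_hecke_if_r_eq_1[OF True x] k(2) by (rule hecke_subset_span_Tw)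
    then show ?thesis
      by (rule lspan_subset_lspan) (use gen[of "\<lambda>_. 0"] r in \<open>auto simp: Lmonomial_zero\<close>)
  next
    case False
    show ?thesis
      using x unfolding Lhecke_def
    proof (rule lspan_subset_lspan)
      fix y assume "y \<in> {Lmonomial k c * Tword ws |c ws. (\<forall>i. c i \<le> 1) \<and> set ws \<subseteq> {1..<k}}"
      then obtain c ws where y: "y = Lmonomial k c * Tword ws" "\<forall>i. c i \<le> 1" "set ws \<subseteq> {1..<k}"
        by blast
      have "\<forall>i. c i < r" using y(2) False r by (metis le_less_trans le_neq_implies_less)
      show "y \<in> lspan emb gens" unfolding y(1)
        by (rule lspan_mult_left[OF Tword_in_span_Tw[OF k(2) y(3)]]) (use gen \<open>\<forall>i. c i < r\<close> in blast)
    qed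
  qed
  then show ?thesis unfolding Hkm_def gens_def by (rule lspan_subset_rspan)
qed

end

theorem lemma5p10:
  fixes emb :: "'r::idom \<Rightarrow> 'a::ring_1"
    and n r a b c d :: nat and q qinv Q :: 'r and Qs :: "nat \<Rightarrow> 'r" and T :: "nat \<Rightarrow> 'a"
  assumes "1 \<le> n" "1 \<le> r"
    and "AK_rels emb n r q qinv Qs T"
    and "a + b \<le> n" "1 \<le> c" "c \<le> d" "d \<le> b"
  shows "\<exists>h :: nat \<Rightarrow> 'a.
     (\<forall>k\<in>{a+c..a+d}. h k \<in> Hkm emb n r qinv T (k - 1) k) \<and>
     Twab T a b * Lij emb qinv T c d Q =
       (Lij emb qinv T (a+c) (a+d) Q + (\<Sum>k = a+c..a+d. AK_L emb qinv T k * h k)) * Twab T a b"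
proof -
  interpret ariki_koike emb n r q qinv Qs T
    by unfold_locales (rule assms(3))
  obtain h where h: "\<forall>k\<in>{a+c..a+d}. h k \<in> Lhecke k k"
    "Twab T a b * LQ c d Q = (LQ (a+c) (a+d) Q + (\<Sum>k=a+c..a+d. L k * h k)) * Twab T a b"
    using Twab_mult_Lij[of a b c d Q] assms(4-7) by auto
  have "\<forall>k\<in>{a+c..a+d}. h k \<in> Hkm emb n r qinv T (k - 1) k"
  proof
    fix k assume "k \<in> {a+c..a+d}"
    then show "h k \<in> Hkm emb n r qinv T (k - 1) k"
      using h(1) assms by (intro Lhecke_subset_Hkm) auto
  qed
  with h(2) show ?thesis by blast
qed

end
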